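(* Let $G\cong K_s\,\square\,K_2$ with $s\ge3$. Then $q(G)=2$, and $G$ has a matrix realization $A\in S(G)$ with exactly two distinct eigenvalues that has the Strong Spectral Property.
   Context: $K_s\square K_2$ is the Cartesian product: vertex set $V(K_s)\times V(K_2)$, with $(g_1,h_1)\sim(g_2,h_2)$ iff ($g_1=g_2$ and $h_1h_2$ an edge) or ($g_1g_2$ an edge and $h_1=h_2$). For a graph $G$ on $n$ vertices, $S(G)$ is the set of real symmetric $n\times n$ matrices $A$ with $a_{ij}\ne0$ ($i\ne j$) iff $ij\in E(G)$ (diagonal unrestricted), and $q(G)$ is the minimum number of distinct eigenvalues of a matrix in $S(G)$. A symmetric matrix $A$ has the Strong Spectral Property (SSP) if the only symmetric matrix $X$ with $A\circ X=O$, $I\circ X=O$ and $AX-XA=O$ is $X=O$ ($\circ$ the entrywise product). *)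

theory Defs
  imports "Jordan_Normal_Form.Char_Poly"
begin

text \<open>Simple graphs on vertex set {0..<n}, given by a symmetric irreflexive
  edge predicate E.\<close>

text \<open>K_s box K_2 on 2s vertices: vertex v < 2s encodes the pair (v mod s, v div s),
  with v mod s a vertex of K_s and v div s in {0,1} a vertex of K_2.\<close>
definition KsK2 :: "nat \<Rightarrow> nat \<Rightarrow> nat \<Rightarrow> bool" where
  "KsK2 s v w \<longleftrightarrow>
     (v mod s = w mod s \<and> v div s \<noteq> w div s) \<or>
     (v mod s \<noteq> w mod s \<and> v div s = w div s)"

definition S_graph :: "nat \<Rightarrow> (nat \<Rightarrow> nat \<Rightarrow> bool) \<Rightarrow> real mat set" where
  "S_graph n E = {A. A \<in> carrier_mat n n \<and> transpose_mat A = A \<and>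
     (\<forall>i<n. \<forall>j<n. i \<noteq> j \<longrightarrow> (A $$ (i,j) \<noteq> 0 \<longleftrightarrow> E i j))}"

definition num_distinct_eigs :: "real mat \<Rightarrow> nat" where
  "num_distinct_eigs A = card {e. eigenvalue A e}"

definition q_graph :: "nat \<Rightarrow> (nat \<Rightarrow> nat \<Rightarrow> bool) \<Rightarrow> nat" where
  "q_graph n E = (LEAST k. \<exists>A \<in> S_graph n E. num_distinct_eigs A = k)"

definition SSP :: "real mat \<Rightarrow> bool" where
  "SSP A \<longleftrightarrow> (\<forall>X \<in> carrier_mat (dim_row A) (dim_row A).
     (transpose_mat X = X \<and>
      (\<forall>i<dim_row A. \<forall>j<dim_row A. A $$ (i,j) * X $$ (i,j) = 0) \<and>
      (\<forall>i<dim_row A. X $$ (i,i) = 0) \<and>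
      A * X - X * A = 0\<^sub>m (dim_row A) (dim_row A))
     \<longrightarrow> X = 0\<^sub>m (dim_row A) (dim_row A))"

end

theory Submission
  imports Defs "Jordan_Normal_Form.Spectral_Radius"
begin

(* Lower bound: a real symmetric n x n matrix A has only real eigenvalues, so if it had a single
   eigenvalue c then, by Schur triangularisation, tr A = n c and tr (A * A) = n c^2.  But
   tr (A * A) is the sum of the squares of all entries of A, which exceeds the sum of the squared
   diagonal entries as soon as some off-diagonal entry is nonzero, and that sum is at least
   (tr A)^2 / n.  So every matrix in S(G) has at least two eigenvalues once G has an edge.

   Realisation: A = [[M, 2I], [2I, -M]] with M = 2J - sI (J the all-ones matrix) has pattern
   K_s box K_2.  Since J^2 = sJ we get M^2 = s^2 I and A^2 = (s^2 + 4) I, so the spectrum of A is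
   {sqrt (s^2 + 4), - sqrt (s^2 + 4)}.  For SSP, a symmetric X with X o A = O and zero diagonal
   has the form [[O, Y], [Y', O]] with Y zero on its diagonal; AX = XA forces Y' = Y and
   MY + YM = O, i.e. s Y_pq = c_p + c_q for the column sums c of Y.  Taking p = q gives c = 0,
   hence Y = O. *)

definition mat_trace :: "'a::comm_ring_1 mat \<Rightarrow> 'a" where
  "mat_trace A = (\<Sum>i = 0..<dim_row A. A $$ (i,i))"

lemma mat_trace_mult_comm:
  fixes X Y :: "'a::comm_ring_1 mat"
  assumes "X \<in> carrier_mat n m" and "Y \<in> carrier_mat m n"
  shows "mat_trace (X * Y) = mat_trace (Y * X)"
proof -
  have "mat_trace (X * Y) = (\<Sum>i = 0..<n. \<Sum>k = 0..<m. X $$ (i,k) * Y $$ (k,i))"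
    unfolding mat_trace_def using assms by (intro sum.cong) (auto simp: scalar_prod_def)
  also have "\<dots> = (\<Sum>k = 0..<m. \<Sum>i = 0..<n. Y $$ (k,i) * X $$ (i,k))"
    by (subst sum.swap) (simp only: mult.commute)
  also have "\<dots> = mat_trace (Y * X)"
    unfolding mat_trace_def using assms by (intro sum.cong) (auto simp: scalar_prod_def)
  finally show ?thesis .
qed

lemma mat_trace_similar:
  fixes A B :: "'a::comm_ring_1 mat"
  assumes "similar_mat_wit A B P Q"
  shows "mat_trace A = mat_trace B"
proof -
  define n where "n = dim_row A"
  note D = similar_mat_witD[OF n_def assms]
  have "mat_trace A = mat_trace ((P * B) * Q)" by (subst D(3)) (rule refl)
  also have "\<dots> = mat_trace (Q * (P * B))"
    by (rule mat_trace_mult_comm[of _ n n]) (use D in auto)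
  also have "Q * (P * B) = (Q * P) * B" by (rule assoc_mult_mat[symmetric]) (use D in auto)
  also have "\<dots> = B" unfolding D(2) using D(5) by (rule left_mult_one_mat)
  finally show ?thesis .
qed

lemma mat_trace_map_of_real:
  fixes A :: "real mat"
  assumes "A \<in> carrier_mat n n"
  shows "mat_trace (map_mat of_real A :: 'a::{real_algebra_1,comm_ring_1} mat) = of_real (mat_trace A)"
  using assms by (simp add: mat_trace_def)

lemma upper_triangular_square_diag:
  fixes B :: "'a::comm_ring_1 mat"
  assumes B: "B \<in> carrier_mat n n" and ut: "upper_triangular B" and k: "k < n"
  shows "(B * B) $$ (k,k) = B $$ (k,k) ^ 2"
proof -
  have "(B * B) $$ (k,k) = (\<Sum>l = 0..<n. B $$ (k,l) * B $$ (l,k))"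
    using B k by (simp add: scalar_prod_def)
  also have "\<dots> = (\<Sum>l = 0..<n. if l = k then B $$ (k,k) ^ 2 else 0)"
  proof (intro sum.cong refl)
    fix l assume "l \<in> {0..<n}"
    then show "B $$ (k,l) * B $$ (l,k) = (if l = k then B $$ (k,k) ^ 2 else 0)"
      using ut B k by (cases l k rule: linorder_cases)
        (auto simp: upper_triangular_def power2_eq_square)
  qed
  finally show ?thesis using k by simp
qed

lemma mat_square_eq_mult: "A \<in> carrier_mat n n \<Longrightarrow> A ^\<^sub>m 2 = A * A"
  by (simp add: numeral_2_eq_2)

lemma mat_trace_char_poly_roots:
  fixes C :: "complex mat"
  assumes C: "C \<in> carrier_mat n n" and cp: "char_poly C = (\<Prod>a\<leftarrow>as. [:-a, 1:])"
  shows "mat_trace C = sum_list as" and "mat_trace (C * C) = (\<Sum>a\<leftarrow>as. a ^ 2)"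
proof -
  obtain B P Q where "schur_decomposition C as = (B, P, Q)"
    by (cases "schur_decomposition C as") auto
  from schur_decomposition[OF C cp this] have sim: "similar_mat_wit C B P Q"
    and ut: "upper_triangular B" and dg: "diag_mat B = as" by auto
  have n: "n = dim_row C" using C by simp
  have B: "B \<in> carrier_mat n n" by (rule similar_mat_witD(5)[OF n sim])
  have tr_diag: "mat_trace B = sum_list (diag_mat B)"
    unfolding diag_mat_def mat_trace_def interv_sum_list_conv_sum_set_nat by simp
  have "mat_trace C = mat_trace B" by (rule mat_trace_similar[OF sim])
  then show "mat_trace C = sum_list as" by (simp only: tr_diag dg)
  have "mat_trace (C ^\<^sub>m 2) = mat_trace (B ^\<^sub>m 2)"
    by (rule mat_trace_similar[OF similar_mat_wit_pow[OF sim]])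
  then have "mat_trace (C * C) = mat_trace (B * B)"
    by (simp only: mat_square_eq_mult[OF C] mat_square_eq_mult[OF B])
  also have "\<dots> = (\<Sum>i = 0..<n. B $$ (i,i) ^ 2)"
    unfolding mat_trace_def using B upper_triangular_square_diag[OF B ut] by simp
  also have "\<dots> = (\<Sum>a\<leftarrow>as. a ^ 2)"
    unfolding dg[symmetric] diag_mat_def map_map using B
    by (simp add: interv_sum_list_conv_sum_set_nat comp_def)
  finally show "mat_trace (C * C) = (\<Sum>a\<leftarrow>as. a ^ 2)" .
qed

lemma eigenvalue_of_real_symmetric_real:
  fixes A :: "real mat"
  assumes A: "A \<in> carrier_mat n n" and sym: "transpose_mat A = A"
    and ev: "eigenvalue (map_mat complex_of_real A) a"
  shows "a \<in> \<real>"
proof -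
  let ?C = "map_mat complex_of_real A"
  have symA: "A $$ (j,i) = A $$ (i,j)" if "i < n" "j < n" for i j
  proof -
    have "A $$ (j,i) = transpose_mat A $$ (i,j)" using that A by simp
    then show ?thesis by (simp only: sym)
  qed
  have C: "?C \<in> carrier_mat n n" and Ct: "transpose_mat ?C = ?C"
    using A symA by auto
  from ev obtain v where v: "v \<in> carrier_vec n" "v \<noteq> 0\<^sub>v n" and Cv: "?C *\<^sub>v v = a \<cdot>\<^sub>v v"
    unfolding eigenvalue_def eigenvector_def using C by auto
  have conj_Cv: "conjugate (?C *\<^sub>v v) = ?C *\<^sub>v conjugate v"
    using A v by (intro eq_vecI) (auto simp: scalar_prod_def)
  have "a * (conjugate v \<bullet> v) = conjugate v \<bullet> (?C *\<^sub>v v)"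
    using v by (simp add: Cv)
  also have "\<dots> = (transpose_mat ?C *\<^sub>v conjugate v) \<bullet> v"
    using C v by (simp add: transpose_vec_mult_scalar)
  also have "\<dots> = cnj a * (conjugate v \<bullet> v)"
    using v by (simp add: Ct flip: conj_Cv) (simp add: Cv conjugate_smult_vec)
  finally have "a * (conjugate v \<bullet> v) = cnj a * (conjugate v \<bullet> v)" .
  moreover have "conjugate v \<bullet> v \<noteq> 0"
    using v conjugate_square_eq_0_vec[OF v(1)] comm_scalar_prod[OF v(1), of "conjugate v"] by auto
  ultimately show ?thesis by (simp add: Reals_cnj_iff)
qed

lemma char_poly_root_real_symmetric:
  fixes A :: "real mat"
  assumes A: "A \<in> carrier_mat n n" and sym: "transpose_mat A = A"
    and root: "poly (char_poly (map_mat complex_of_real A)) a = 0"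
  shows "a = of_real (Re a)" and "eigenvalue A (Re a)"
proof -
  let ?C = "map_mat complex_of_real A"
  have "eigenvalue ?C a"
    using eigenvalue_root_char_poly[of ?C n] A root by simp
  then show a_real: "a = of_real (Re a)"
    using eigenvalue_of_real_symmetric_real[OF A sym] by (simp add: Reals_def)
  have "of_real (poly (char_poly A) (Re a)) = poly (char_poly ?C) (of_real (Re a))"
    unfolding of_real_hom.char_poly_hom[OF A] of_real_hom.poly_map_poly ..
  also have "\<dots> = 0" by (simp only: a_real[symmetric] root)
  finally show "eigenvalue A (Re a)"
    using eigenvalue_root_char_poly[OF A] by simp
qed

lemma card_mult_square_le_sum_squares:
  fixes f :: "'a \<Rightarrow> real"
  assumes sum_eq: "(\<Sum>i\<in>I. f i) = real (card I) * c"
  shows "real (card I) * c ^ 2 \<le> (\<Sum>i\<in>I. f i ^ 2)"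
proof -
  have "0 \<le> (\<Sum>i\<in>I. (f i - c) ^ 2)" by (intro sum_nonneg) auto
  also have "\<dots> = (\<Sum>i\<in>I. f i ^ 2 - (2 * c) * f i + c ^ 2)"
    by (intro sum.cong) (simp_all add: power2_diff)
  also have "\<dots> = (\<Sum>i\<in>I. f i ^ 2) - 2 * c * (\<Sum>i\<in>I. f i) + real (card I) * c ^ 2"
    by (simp only: sum.distrib sum_subtractf sum_distrib_left[symmetric] sum_constant)
  finally show ?thesis by (simp add: sum_eq power2_eq_square algebra_simps)
qed

lemma mat_trace_square_symmetric:
  fixes A :: "'a::comm_ring_1 mat"
  assumes A: "A \<in> carrier_mat n n" and sym: "transpose_mat A = A"
  shows "mat_trace (A * A) = (\<Sum>k = 0..<n. \<Sum>l = 0..<n. A $$ (k,l) ^ 2)"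
  unfolding mat_trace_def
proof (intro sum.cong)
  fix k assume k: "k \<in> {0..<n}"
  have "A $$ (l,k) = A $$ (k,l)" if "l < n" for l
    using that k A by (subst sym[symmetric]) simp
  then show "(A * A) $$ (k,k) = (\<Sum>l = 0..<n. A $$ (k,l) ^ 2)"
    using A k by (auto simp: scalar_prod_def power2_eq_square intro: sum.cong)
qed (use A in simp)

lemma sum_diag_squares_less_mat_trace_square:
  fixes A :: "real mat"
  assumes A: "A \<in> carrier_mat n n" and sym: "transpose_mat A = A"
    and ij: "i < n" "j < n" "i \<noteq> j" "A $$ (i,j) \<noteq> 0"
  shows "(\<Sum>k = 0..<n. A $$ (k,k) ^ 2) < mat_trace (A * A)"
  unfolding mat_trace_square_symmetric[OF A sym]
proof (rule sum_strict_mono_ex1)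
  show "\<forall>k\<in>{0..<n}. A $$ (k,k) ^ 2 \<le> (\<Sum>l = 0..<n. A $$ (k,l) ^ 2)"
    by (auto intro!: member_le_sum)
  have "A $$ (i,i) ^ 2 < (\<Sum>l \<in> {i,j}. A $$ (i,l) ^ 2)" using ij by simp
  also have "\<dots> \<le> (\<Sum>l = 0..<n. A $$ (i,l) ^ 2)" using ij by (intro sum_mono2) auto
  finally show "\<exists>k\<in>{0..<n}. A $$ (k,k) ^ 2 < (\<Sum>l = 0..<n. A $$ (k,l) ^ 2)"
    using ij by auto
qed simp

lemma symmetric_two_eigenvalues:
  fixes A :: "real mat"
  assumes A: "A \<in> carrier_mat n n" and sym: "transpose_mat A = A"
    and ij: "i < n" "j < n" "i \<noteq> j" "A $$ (i,j) \<noteq> 0"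
  shows "card {e. eigenvalue A e} \<ge> 2"
proof (rule ccontr)
  assume "\<not> ?thesis"
  then have at_most_one: "x = y" if "eigenvalue A x" "eigenvalue A y" for x y
    using that card_finite_spectrum(1)[OF A] card_le_Suc0_iff_eq
    unfolding spectrum_def by fastforce
  let ?C = "map_mat complex_of_real A"
  have C: "?C \<in> carrier_mat n n" using A by simp
  obtain as where cp: "char_poly ?C = (\<Prod>a\<leftarrow>as. [:-a, 1:])" and len: "length as = n"
    using char_poly_factorized[OF C] by blast
  have root: "poly (char_poly ?C) a = 0" if "a \<in> set as" for a
    using that unfolding cp poly_prod_list prod_list_zero_iff by force
  define lam where "lam = Re (as ! 0)"
  have "as ! 0 \<in> set as" using len ij by (auto intro: nth_mem)
  then have as_const: "a = of_real lam" if "a \<in> set as" for a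
    using that root char_poly_root_real_symmetric[OF A sym] at_most_one
    unfolding lam_def by metis
  have as_rep: "as = replicate n (of_real lam)"
    using replicate_length_same[of as "of_real lam"] as_const len by auto
  have "of_real (mat_trace A) = (of_real (real n * lam) :: complex)"
    using mat_trace_char_poly_roots(1)[OF C cp]
    by (simp add: mat_trace_map_of_real[OF A] as_rep sum_list_replicate)
  moreover have "of_real (mat_trace (A * A)) = (of_real (real n * lam ^ 2) :: complex)"
    using mat_trace_char_poly_roots(2)[OF C cp]
    by (simp add: mat_trace_map_of_real[OF mult_carrier_mat[OF A A]] as_rep sum_list_replicate
        of_real_hom.mat_hom_mult[OF A A, symmetric])
  ultimately have tr: "mat_trace A = real n * lam" and tr2: "mat_trace (A * A) = real n * lam ^ 2"
    by (simp_all only: of_real_eq_iff)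
  have "real n * lam ^ 2 \<le> (\<Sum>k = 0..<n. A $$ (k,k) ^ 2)"
    using card_mult_square_le_sum_squares[of "\<lambda>k. A $$ (k,k)" "{0..<n}" lam] tr A
    by (simp add: mat_trace_def)
  then show False
    using sum_diag_squares_less_mat_trace_square[OF A sym ij] tr2 by simp
qed

lemma smult_mat_mult_mat_vec:
  fixes B :: "'a::comm_ring_1 mat"
  assumes "B \<in> carrier_mat nr nc" and "v \<in> carrier_vec nc"
  shows "(c \<cdot>\<^sub>m B) *\<^sub>v v = c \<cdot>\<^sub>v (B *\<^sub>v v)"
  using assms by (intro eq_vecI) (auto simp: scalar_prod_def sum_distrib_left mult.assoc)

lemma eigenvalue_square_eq_scalar:
  fixes A :: "'a::field mat"
  assumes A: "A \<in> carrier_mat n n" and sq: "A * A = c \<cdot>\<^sub>m 1\<^sub>m n" and ev: "eigenvalue A e"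
  shows "e ^ 2 = c"
proof -
  from ev obtain v where v: "v \<in> carrier_vec n" "v \<noteq> 0\<^sub>v n" and Av: "A *\<^sub>v v = e \<cdot>\<^sub>v v"
    unfolding eigenvalue_def eigenvector_def using A by auto
  obtain i where i: "i < n" "v $ i \<noteq> 0"
    using v by (metis eq_vecI carrier_vecD index_zero_vec)
  have "e ^ 2 \<cdot>\<^sub>v v = A *\<^sub>v (A *\<^sub>v v)"
    using A v by (simp add: Av mult_mat_vec power2_eq_square smult_smult_assoc)
  also have "\<dots> = c \<cdot>\<^sub>v v"
    using A v by (simp add: sq smult_mat_mult_mat_vec[of "1\<^sub>m n" n n] flip: assoc_mult_mat_vec)
  finally have "e ^ 2 * v $ i = c * v $ i"
    using i v by (metis carrier_vecD index_smult_vec(1))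
  then show ?thesis using i by simp
qed

lemma eigenvalue_of_square_eq_scalar:
  fixes A :: "'a::field mat"
  assumes A: "A \<in> carrier_mat n n" and sq: "A * A = \<mu> ^ 2 \<cdot>\<^sub>m 1\<^sub>m n"
    and u: "u \<in> carrier_vec n" and not_eigen: "A *\<^sub>v u \<noteq> - \<mu> \<cdot>\<^sub>v u"
  shows "eigenvalue A \<mu>"
proof -
  define w where "w = A *\<^sub>v u + \<mu> \<cdot>\<^sub>v u"
  have w: "w \<in> carrier_vec n" using A u by (simp add: w_def)
  have "w \<noteq> 0\<^sub>v n"
  proof
    assume w0: "w = 0\<^sub>v n"
    have "A *\<^sub>v u = - \<mu> \<cdot>\<^sub>v u"
    proof (rule eq_vecI)
      fix i assume "i < dim_vec (- \<mu> \<cdot>\<^sub>v u)"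
      then have i: "i < n" using u by simp
      then have "w $ i = 0" using w0 by simp
      then show "(A *\<^sub>v u) $ i = (- \<mu> \<cdot>\<^sub>v u) $ i"
        using i A u by (simp add: w_def eq_neg_iff_add_eq_0)
    qed (use A u in simp)
    with not_eigen show False ..
  qed
  moreover have "A *\<^sub>v w = \<mu> \<cdot>\<^sub>v w"
  proof -
    have "A *\<^sub>v (A *\<^sub>v u) = \<mu> ^ 2 \<cdot>\<^sub>v u"
      using A u by (simp add: sq smult_mat_mult_mat_vec[of "1\<^sub>m n" n n] flip: assoc_mult_mat_vec)
    then have "A *\<^sub>v w = \<mu> ^ 2 \<cdot>\<^sub>v u + \<mu> \<cdot>\<^sub>v (A *\<^sub>v u)"
      using A u by (simp add: w_def mult_add_distrib_mat_vec mult_mat_vec)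
    also have "\<dots> = \<mu> \<cdot>\<^sub>v w"
      using A u by (intro eq_vecI) (simp_all add: w_def power2_eq_square algebra_simps)
    finally show ?thesis .
  qed
  ultimately show ?thesis
    unfolding eigenvalue_def eigenvector_def using A w by auto
qed

lemma less_double_cases:
  fixes v s :: nat
  assumes "v < 2 * s"
  obtains (low) "v < s" | (high) p where "v = p + s" "p < s"
  using assms by (metis le_add_diff_inverse2 less_diff_conv2 mult_2 not_less)

lemma sum_upto_double:
  fixes g :: "nat \<Rightarrow> 'a::comm_monoid_add"
  shows "(\<Sum>u = 0..<2 * s. g u) = (\<Sum>k = 0..<s. g k + g (k + s))"
proof -
  have "(\<Sum>u = 0..<2 * s. g u) = (\<Sum>u = 0..<s. g u) + (\<Sum>u = s..<s + s. g u)"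
    by (simp add: mult_2 sum.atLeastLessThan_concat)
  also have "(\<Sum>u = s..<s + s. g u) = (\<Sum>k = 0..<s. g (k + s))"
    using sum.shift_bounds_nat_ivl[of g 0 s s] by simp
  finally show ?thesis by (simp add: sum.distrib)
qed

lemma mult_mat_index_double:
  assumes "A \<in> carrier_mat m (2 * s)" and "B \<in> carrier_mat (2 * s) n" and "i < m" and "j < n"
  shows "(A * B) $$ (i, j) =
    (\<Sum>k = 0..<s. A $$ (i, k) * B $$ (k, j) + A $$ (i, k + s) * B $$ (k + s, j))"
  using assms by (simp add: scalar_prod_def sum_upto_double)

lemma sum_ite_eq_mult_left:
  fixes x y :: "'a::comm_ring_1" and p s :: nat
  assumes "p < s"
  shows "(\<Sum>k = 0..<s. (if p = k then x else y) * f k) = (x - y) * f p + y * (\<Sum>k = 0..<s. f k)"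
proof -
  have "(\<Sum>k = 0..<s. (if p = k then x else y) * f k)
      = (\<Sum>k = 0..<s. (if p = k then (x - y) * f k else 0)) + (\<Sum>k = 0..<s. y * f k)"
    unfolding sum.distrib[symmetric] by (intro sum.cong) (auto simp: algebra_simps)
  also have "(\<Sum>k = 0..<s. (if p = k then (x - y) * f k else 0)) = (x - y) * f p"
    using assms by (subst sum.delta') auto
  finally show ?thesis by (simp add: sum_distrib_left)
qed

lemma sum_ite_eq_mult_right:
  fixes x y :: "'a::comm_ring_1" and q s :: nat
  assumes "q < s"
  shows "(\<Sum>k = 0..<s. f k * (if k = q then x else y)) = (x - y) * f q + y * (\<Sum>k = 0..<s. f k)"
proof -
  have "(\<Sum>k = 0..<s. f k * (if k = q then x else y))
      = (\<Sum>k = 0..<s. (if q = k then x else y) * f k)"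
    by (intro sum.cong) auto
  then show ?thesis by (simp only: sum_ite_eq_mult_left[OF assms])
qed

lemma sum_ite_eq:
  fixes x y :: "'a::comm_ring_1" and q s :: nat
  assumes "q < s"
  shows "(\<Sum>k = 0..<s. if k = q then x else y) = (x - y) + of_nat s * y"
  using sum_ite_eq_mult_right[OF assms, of "\<lambda>_. 1" x y] by simp

(* The matrix [[M, 2I], [2I, -M]], M = 2J - sI, in the vertex encoding of KsK2. *)
definition KsK2_realization :: "nat \<Rightarrow> real mat" where
  "KsK2_realization s = mat (2 * s) (2 * s) (\<lambda>(v, w).
     if v div s = w div s
     then (if v div s = 0 then 1 else -1) * (if v mod s = w mod s then 2 - real s else 2)
     else if v mod s = w mod s then 2 else 0)"

lemma KsK2_realization_carrier: "KsK2_realization s \<in> carrier_mat (2 * s) (2 * s)"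
  by (simp add: KsK2_realization_def)

lemma KsK2_realization_blocks:
  assumes "p < s" and "q < s"
  shows "KsK2_realization s $$ (p, q) = (if p = q then 2 - real s else 2)"
    and "KsK2_realization s $$ (p, q + s) = (if p = q then 2 else 0)"
    and "KsK2_realization s $$ (p + s, q) = (if p = q then 2 else 0)"
    and "KsK2_realization s $$ (p + s, q + s) = (if p = q then real s - 2 else - 2)"
  using assms by (simp_all add: KsK2_realization_def)

lemma KsK2_realization_mult_left:
  assumes B: "B \<in> carrier_mat (2 * s) n" and p: "p < s" and w: "w < n"
  shows "(KsK2_realization s * B) $$ (p, w)
      = 2 * (\<Sum>k = 0..<s. B $$ (k, w)) - real s * B $$ (p, w) + 2 * B $$ (p + s, w)"
    and "(KsK2_realization s * B) $$ (p + s, w)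
      = 2 * B $$ (p, w) + real s * B $$ (p + s, w) - 2 * (\<Sum>k = 0..<s. B $$ (k + s, w))"
  using p w
  by (simp_all add: mult_mat_index_double[OF KsK2_realization_carrier B] KsK2_realization_blocks
      sum.distrib sum_ite_eq_mult_left)

lemma KsK2_realization_mult_right:
  assumes B: "B \<in> carrier_mat n (2 * s)" and v: "v < n" and q: "q < s"
  shows "(B * KsK2_realization s) $$ (v, q)
      = 2 * (\<Sum>k = 0..<s. B $$ (v, k)) - real s * B $$ (v, q) + 2 * B $$ (v, q + s)"
    and "(B * KsK2_realization s) $$ (v, q + s)
      = 2 * B $$ (v, q) + real s * B $$ (v, q + s) - 2 * (\<Sum>k = 0..<s. B $$ (v, k + s))"
  using v q
  by (simp_all add: mult_mat_index_double[OF B KsK2_realization_carrier] KsK2_realization_blocks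
      sum.distrib sum_ite_eq_mult_right)

lemma KsK2_realization_square:
  "KsK2_realization s * KsK2_realization s = (real s ^ 2 + 4) \<cdot>\<^sub>m 1\<^sub>m (2 * s)"
proof (rule eq_matI)
  fix v w assume "v < dim_row ((real s ^ 2 + 4) \<cdot>\<^sub>m 1\<^sub>m (2 * s))"
    and "w < dim_col ((real s ^ 2 + 4) \<cdot>\<^sub>m 1\<^sub>m (2 * s))"
  then have v: "v < 2 * s" and w: "w < 2 * s" by auto
  note mult = KsK2_realization_mult_left[OF KsK2_realization_carrier]
  show "(KsK2_realization s * KsK2_realization s) $$ (v, w)
      = ((real s ^ 2 + 4) \<cdot>\<^sub>m 1\<^sub>m (2 * s)) $$ (v, w)"
    using v w
    by (cases rule: less_double_cases[OF v]; cases rule: less_double_cases[OF w])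
      (simp_all add: mult KsK2_realization_blocks sum_ite_eq,
       simp_all add: power2_eq_square algebra_simps)
qed (simp_all add: KsK2_realization_def)

lemma KsK2_realization_in_S_graph: "KsK2_realization s \<in> S_graph (2 * s) (KsK2 s)"
proof -
  have same_vertex: "v = w" if "v div s = w div s" and "v mod s = w mod s" for v w :: nat
    using that by (metis div_mult_mod_eq)
  have "transpose_mat (KsK2_realization s) = KsK2_realization s"
    by (rule eq_matI) (auto simp: KsK2_realization_def)
  moreover have "KsK2_realization s $$ (v, w) \<noteq> 0 \<longleftrightarrow> KsK2 s v w"
    if "v < 2 * s" and "w < 2 * s" and "v \<noteq> w" for v w
    using that same_vertex[of v w] by (auto simp: KsK2_realization_def KsK2_def)
  ultimately show ?thesis
    unfolding S_graph_def using KsK2_realization_carrier by blast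
qed

lemma KsK2_realization_eigenvalues:
  assumes "s \<ge> 2"
  shows "{e. eigenvalue (KsK2_realization s) e} = {sqrt (real s ^ 2 + 4), - sqrt (real s ^ 2 + 4)}"
proof -
  let ?A = "KsK2_realization s" and ?r = "sqrt (real s ^ 2 + 4)"
  have sq: "?A * ?A = ?r ^ 2 \<cdot>\<^sub>m 1\<^sub>m (2 * s)" "?A * ?A = (- ?r) ^ 2 \<cdot>\<^sub>m 1\<^sub>m (2 * s)"
    using KsK2_realization_square by simp_all
  let ?u = "unit_vec (2 * s) 0"
  have "(?A *\<^sub>v ?u) $ 1 = 2" and "(c \<cdot>\<^sub>v ?u) $ 1 = 0" for c :: real
    using assms KsK2_realization_blocks(1)[of 1 s 0] KsK2_realization_carrier[of s]
    by simp_all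
  then have not_eigen: "?A *\<^sub>v ?u \<noteq> c \<cdot>\<^sub>v ?u" for c by (metis zero_neq_numeral)
  have "eigenvalue ?A ?r" and "eigenvalue ?A (- ?r)"
    using eigenvalue_of_square_eq_scalar[OF KsK2_realization_carrier _ unit_vec_carrier not_eigen] sq
    by blast+
  moreover have "e = ?r \<or> e = - ?r" if "eigenvalue ?A e" for e
  proof -
    have "e ^ 2 = ?r ^ 2"
      by (rule eigenvalue_square_eq_scalar[OF KsK2_realization_carrier sq(1) that])
    then show ?thesis by (simp only: power2_eq_iff)
  qed
  ultimately show ?thesis by auto
qed

lemma S_graph_SSP_support:
  assumes "A \<in> S_graph n E" and "\<forall>i<n. \<forall>j<n. A $$ (i,j) * X $$ (i,j) = 0"
    and "\<forall>i<n. X $$ (i,i) = 0" and "i < n" and "j < n" and "X $$ (i,j) \<noteq> 0"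
  shows "i \<noteq> j \<and> \<not> E i j"
  using assms unfolding S_graph_def by fastforce

lemma KsK2_non_edge:
  assumes "\<not> KsK2 s v w" and "v \<noteq> w"
  shows "v div s \<noteq> w div s \<and> v mod s \<noteq> w mod s"
  using assms div_mult_mod_eq[of v s] div_mult_mod_eq[of w s] unfolding KsK2_def by metis

lemma zero_mat_if_blocks_zero:
  assumes X: "X \<in> carrier_mat (2 * s) (2 * s)"
    and blocks: "\<And>p q. p < s \<Longrightarrow> q < s \<Longrightarrow>
      X $$ (p, q) = 0 \<and> X $$ (p, q + s) = 0 \<and> X $$ (p + s, q) = 0 \<and> X $$ (p + s, q + s) = 0"
  shows "X = 0\<^sub>m (2 * s) (2 * s)"
proof (rule eq_matI)
  fix v w assume "v < dim_row (0\<^sub>m (2 * s) (2 * s))" "w < dim_col (0\<^sub>m (2 * s) (2 * s))"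
  then have v: "v < 2 * s" and w: "w < 2 * s" by auto
  show "X $$ (v, w) = 0\<^sub>m (2 * s) (2 * s) $$ (v, w)"
    using v w blocks
    by (cases rule: less_double_cases[OF v]; cases rule: less_double_cases[OF w]) simp_all
qed (use X in auto)

lemma KsK2_realization_commuting_zero:
  assumes s: "s > 0" and X: "X \<in> carrier_mat (2 * s) (2 * s)" and sym: "transpose_mat X = X"
    and top: "\<And>p q. p < s \<Longrightarrow> q < s \<Longrightarrow> X $$ (p, q) = 0"
    and bottom: "\<And>p q. p < s \<Longrightarrow> q < s \<Longrightarrow> X $$ (p + s, q + s) = 0"
    and upper_diag: "\<And>p. p < s \<Longrightarrow> X $$ (p, p + s) = 0"
    and comm: "KsK2_realization s * X = X * KsK2_realization s"
  shows "X = 0\<^sub>m (2 * s) (2 * s)"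
proof -
  define Y where "Y p q = X $$ (p, q + s)" for p q
  have X_lower: "X $$ (p + s, q) = Y q p" if "p < s" "q < s" for p q
  proof -
    have "X $$ (p + s, q) = transpose_mat X $$ (q, p + s)" using that X by simp
    then show ?thesis by (simp only: sym Y_def)
  qed
  note mult_left = KsK2_realization_mult_left[OF X]
    and mult_right = KsK2_realization_mult_right[OF X]
  have comm_entry: "(KsK2_realization s * X) $$ (v, w) = (X * KsK2_realization s) $$ (v, w)"
    for v w by (simp only: comm)
  have Y_sym: "Y q p = Y p q" if "p < s" "q < s" for p q
    using comm_entry[of p q] that by (simp add: mult_left mult_right top X_lower Y_def)
  define c where "c p = (\<Sum>k = 0..<s. Y k p)" for p
  have row_sum: "(\<Sum>k = 0..<s. Y p k) = c p" if "p < s" for p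
    unfolding c_def using that Y_sym by (intro sum.cong) auto
  have Y_eq: "real s * Y p q = c p + c q" if "p < s" "q < s" for p q
  proof -
    have "(KsK2_realization s * X) $$ (p, q + s) = 2 * c q - real s * Y p q"
      using that by (simp add: mult_left bottom c_def Y_def)
    moreover have "(X * KsK2_realization s) $$ (p, q + s) = real s * Y p q - 2 * c p"
      using that by (simp add: mult_right top Y_def flip: row_sum[OF that(1)])
    ultimately show ?thesis using comm_entry[of p "q + s"] by simp
  qed
  have "c p = 0" if "p < s" for p
    using Y_eq[OF that that] upper_diag[OF that] by (simp add: Y_def)
  then have "Y p q = 0" if "p < s" "q < s" for p q
    using Y_eq[OF that] that s by simp
  then show ?thesis
    using X top bottom X_lower by (intro zero_mat_if_blocks_zero) (simp_all add: Y_def)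
qed

lemma KsK2_realization_SSP:
  assumes "s > 0"
  shows "SSP (KsK2_realization s)"
  unfolding SSP_def
proof (intro ballI impI)
  let ?A = "KsK2_realization s"
  have dim: "dim_row ?A = 2 * s" using KsK2_realization_carrier[of s] by simp
  fix X :: "real mat" assume "X \<in> carrier_mat (dim_row ?A) (dim_row ?A)"
  then have X: "X \<in> carrier_mat (2 * s) (2 * s)" by (simp only: dim)
  assume H: "transpose_mat X = X \<and>
      (\<forall>i<dim_row ?A. \<forall>j<dim_row ?A. ?A $$ (i,j) * X $$ (i,j) = 0) \<and>
      (\<forall>i<dim_row ?A. X $$ (i,i) = 0) \<and> ?A * X - X * ?A = 0\<^sub>m (dim_row ?A) (dim_row ?A)"
  have sym: "transpose_mat X = X"
    and orth: "\<forall>i<2 * s. \<forall>j<2 * s. ?A $$ (i,j) * X $$ (i,j) = 0"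
    and diag: "\<forall>i<2 * s. X $$ (i,i) = 0"
    and comm: "?A * X - X * ?A = 0\<^sub>m (2 * s) (2 * s)"
    using H unfolding dim by blast+
  have supp: "v div s \<noteq> w div s \<and> v mod s \<noteq> w mod s"
    if "v < 2 * s" "w < 2 * s" "X $$ (v, w) \<noteq> 0" for v w
    using S_graph_SSP_support[OF KsK2_realization_in_S_graph orth diag that] KsK2_non_edge by blast
  have top: "X $$ (p, q) = 0" and bottom: "X $$ (p + s, q + s) = 0" if "p < s" "q < s" for p q
    using that supp[of p q] supp[of "p + s" "q + s"] by auto
  have upper_diag: "X $$ (p, p + s) = 0" if "p < s" for p
    using that supp[of p "p + s"] by auto
  have "?A * X = X * ?A"
  proof (rule eq_matI)
    fix i j assume "i < dim_row (X * ?A)" and "j < dim_col (X * ?A)"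
    then have "(?A * X - X * ?A) $$ (i, j) = 0"
      using X KsK2_realization_carrier[of s] by (simp add: comm)
    then show "(?A * X) $$ (i, j) = (X * ?A) $$ (i, j)"
      using \<open>i < dim_row (X * ?A)\<close> \<open>j < dim_col (X * ?A)\<close> X KsK2_realization_carrier[of s]
      by simp
  qed (use X KsK2_realization_carrier[of s] in simp_all)
  with assms X sym top bottom upper_diag have "X = 0\<^sub>m (2 * s) (2 * s)"
    by (rule KsK2_realization_commuting_zero)
  then show "X = 0\<^sub>m (dim_row ?A) (dim_row ?A)" by (simp only: dim)
qed

lemma S_graph_edge_two_eigenvalues:
  assumes "A \<in> S_graph n E" and "i < n" and "j < n" and "i \<noteq> j" and "E i j"
  shows "num_distinct_eigs A \<ge> 2"
  using assms unfolding S_graph_def num_distinct_eigs_def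
  by (intro symmetric_two_eigenvalues[of A n i j]) auto

lemma q_graph_eq_2:
  assumes "i < n" and "j < n" and "i \<noteq> j" and "E i j"
    and "A \<in> S_graph n E" and "num_distinct_eigs A = 2"
  shows "q_graph n E = 2"
  unfolding q_graph_def
proof (rule Least_equality)
  show "\<exists>A \<in> S_graph n E. num_distinct_eigs A = 2" using assms(5,6) by blast
qed (use S_graph_edge_two_eigenvalues assms(1-4) in blast)

theorem mainTheorem15:
  fixes s :: nat
  assumes "s \<ge> 3"
  shows "q_graph (2 * s) (KsK2 s) = 2 \<and>
    (\<exists>A \<in> S_graph (2 * s) (KsK2 s). num_distinct_eigs A = 2 \<and> SSP A)"
proof -
  let ?A = "KsK2_realization s"
  have "sqrt (real s ^ 2 + 4) > 0" by (simp add: add_nonneg_pos)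
  then have two: "num_distinct_eigs ?A = 2"
    using KsK2_realization_eigenvalues[of s] assms by (simp add: num_distinct_eigs_def)
  have "KsK2 s 0 1" using assms by (simp add: KsK2_def)
  with assms have "q_graph (2 * s) (KsK2 s) = 2"
    by (intro q_graph_eq_2[OF _ _ _ _ KsK2_realization_in_S_graph two]) auto
  moreover have "SSP ?A" using KsK2_realization_SSP[of s] assms by simp
  ultimately show ?thesis using KsK2_realization_in_S_graph two by blast
qed

end
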